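(* Every orbit of the action of $\mathrm{Aut}(\mathbb{G})$ on $\mathbb{G}$ that is three-dimensional, namely every set $\mathscr{L}_a=\{(z_1+z_2,z_1z_2):z_1,z_2\in\mathbb{D},\ |\frac{z_1-z_2}{1-\overline{z_1}z_2}|=a\}$ with $a\in(0,1)$, is a strongly pseudoconvex real hypersurface in $\mathbb{G}$.
   Context: $\mathbb{D}$ is the open unit disc in $\mathbb{C}$ and $\mathbb{G}=\{(z_1+z_2,z_1z_2):z_1,z_2\in\mathbb{D}\}\subset\mathbb{C}^2$ is the symmetrized bidisc. Its holomorphic automorphism group is $\mathrm{Aut}(\mathbb{G})=\{H_\varphi:\varphi\in\mathrm{Aut}(\mathbb{D})\}$, where $H_\varphi(z_1+z_2,z_1z_2)=(\varphi(z_1)+\varphi(z_2),\varphi(z_1)\varphi(z_2))$. The orbits of this action are the sets $\mathscr{L}_a$, $a\in[0,1)$; $\mathscr{L}_0=\{(2z,z^2):z\in\mathbb{D}\}$ is a complex curve and the others are real three-dimensional. *)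

theory Defs
  imports "HOL-Analysis.Analysis"
begin

definition unit_disc :: "complex set" where
  "unit_disc = {z. cmod z < 1}"

definition symmetrized_bidisc :: "(complex \<times> complex) set" where
  "symmetrized_bidisc =
     {(z1 + z2, z1 * z2) | z1 z2. z1 \<in> unit_disc \<and> z2 \<in> unit_disc}"

definition orbit_L :: "real \<Rightarrow> (complex \<times> complex) set" where
  "orbit_L a =
     {(z1 + z2, z1 * z2) | z1 z2. z1 \<in> unit_disc \<and> z2 \<in> unit_disc \<and>
        cmod ((z1 - z2) / (1 - cnj z1 * z2)) = a}"

definition cmulI :: "complex \<times> complex \<Rightarrow> complex \<times> complex" where
  "cmulI w = (\<i> * fst w, \<i> * snd w)"

definition C2_with_derivs ::
  "(complex \<times> complex) set \<Rightarrow> (complex \<times> complex \<Rightarrow> real)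
   \<Rightarrow> (complex \<times> complex \<Rightarrow> (complex \<times> complex) \<Rightarrow>\<^sub>L real)
   \<Rightarrow> (complex \<times> complex \<Rightarrow> (complex \<times> complex) \<Rightarrow>\<^sub>L ((complex \<times> complex) \<Rightarrow>\<^sub>L real))
   \<Rightarrow> bool" where
  "C2_with_derivs U \<rho> \<rho>' \<rho>'' \<longleftrightarrow>
     (\<forall>x\<in>U. (\<rho> has_derivative blinfun_apply (\<rho>' x)) (at x)) \<and>
     (\<forall>x\<in>U. (\<rho>' has_derivative blinfun_apply (\<rho>'' x)) (at x)) \<and>
     continuous_on U \<rho>''"

text \<open>The complex tangent space is \<open>{w. d\<rho>(x) w = 0 \<and> d\<rho>(x)(J w) = 0}\<close>, and the Levi form
  \<open>\<Sum> \<rho>_{j\<bar>k} w_j \<bar>w_k\<close> equals \<open>(1/4)(D\<^sup>2\<rho>(x)(w,w) + D\<^sup>2\<rho>(x)(Jw,Jw))\<close>.\<close>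
definition levi_form :: "(complex \<times> complex) \<Rightarrow>\<^sub>L ((complex \<times> complex) \<Rightarrow>\<^sub>L real)
   \<Rightarrow> complex \<times> complex \<Rightarrow> real" where
  "levi_form H w = (H w w + H (cmulI w) (cmulI w)) / 4"

definition levi_pos_def_at ::
  "(complex \<times> complex \<Rightarrow> (complex \<times> complex) \<Rightarrow>\<^sub>L real)
   \<Rightarrow> (complex \<times> complex \<Rightarrow> (complex \<times> complex) \<Rightarrow>\<^sub>L ((complex \<times> complex) \<Rightarrow>\<^sub>L real))
   \<Rightarrow> complex \<times> complex \<Rightarrow> bool" where
  "levi_pos_def_at \<rho>' \<rho>'' x \<longleftrightarrow>
     (\<forall>w. w \<noteq> 0 \<and> \<rho>' x w = 0 \<and> \<rho>' x (cmulI w) = 0 \<longrightarrow> levi_form (\<rho>'' x) w > 0)"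

definition strongly_pseudoconvex_hypersurface ::
  "(complex \<times> complex) set \<Rightarrow> (complex \<times> complex) set \<Rightarrow> bool" where
  "strongly_pseudoconvex_hypersurface M \<Omega> \<longleftrightarrow>
     M \<subseteq> \<Omega> \<and>
     (\<forall>p\<in>M. \<exists>U \<rho> \<rho>' \<rho>''. open U \<and> p \<in> U \<and> U \<subseteq> \<Omega> \<and>
        C2_with_derivs U \<rho> \<rho>' \<rho>'' \<and>
        M \<inter> U = {x\<in>U. \<rho> x = 0} \<and>
        (\<forall>x\<in>M \<inter> U. \<rho>' x \<noteq> 0) \<and>
        (\<forall>x\<in>M \<inter> U. levi_pos_def_at \<rho>' \<rho>'' x))"

end

theory Submission
  imports Defs
begin

(* Write x = (s, p) = (z1 + z2, z1 z2), g = s^2 - 4p and E = 2 + 2|p|^2 - |s|^2. Then g = (z1 - z2)^2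
   and E = |1 - cnj z1 z2|^2 + (1 - |z1|^2)(1 - |z2|^2), so the condition
   |z1 - z2| = a |1 - cnj z1 z2| becomes (2 - a^2)|g| = a^2 E, and L_a is the zero set in G of the
   polynomial rho = (2 - a^2)^2 |g|^2 - a^4 E^2. On L_a the complex tangent line is spanned by an
   explicit vector, and along it the Levi form of rho equals 2 a^4 (|dE(w)|^2 - E (2|w2|^2 - |w1|^2)),
   where dE is the complex-linear part of the differential of E. On the spanning vector this
   evaluates to 4E(E^2 - |g|^2), which is positive because |g| < E on L_a. *)

section \<open>Strongly pseudoconvex zero sets\<close>

lemma C2_with_derivs_subset:
  "C2_with_derivs V \<rho> \<rho>' \<rho>'' \<Longrightarrow> U \<subseteq> V \<Longrightarrow> C2_with_derivs U \<rho> \<rho>' \<rho>''"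
  unfolding C2_with_derivs_def by (auto intro: continuous_on_subset)

lemma strongly_pseudoconvex_hypersurfaceI:
  assumes M: "M = {x \<in> \<Omega>. \<rho> x = 0}" and C2: "C2_with_derivs \<Omega> \<rho> \<rho>' \<rho>''"
    and deriv_nonzero: "\<And>x. x \<in> M \<Longrightarrow> \<rho>' x \<noteq> 0"
    and levi: "\<And>x. x \<in> M \<Longrightarrow> levi_pos_def_at \<rho>' \<rho>'' x"
    and nhd: "\<And>p. p \<in> M \<Longrightarrow> \<exists>U. open U \<and> p \<in> U \<and> U \<subseteq> \<Omega>"
  shows "strongly_pseudoconvex_hypersurface M \<Omega>"
  unfolding strongly_pseudoconvex_hypersurface_def
proof (intro conjI ballI)
  show "M \<subseteq> \<Omega>"
    using M by blast
  fix p
  assume "p \<in> M"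
  then obtain U where U: "open U" "p \<in> U" "U \<subseteq> \<Omega>"
    using nhd by blast
  then have "M \<inter> U = {x \<in> U. \<rho> x = 0}"
    using M by blast
  then show "\<exists>U \<rho> \<rho>' \<rho>''. open U \<and> p \<in> U \<and> U \<subseteq> \<Omega> \<and> C2_with_derivs U \<rho> \<rho>' \<rho>'' \<and>
      M \<inter> U = {x \<in> U. \<rho> x = 0} \<and> (\<forall>x\<in>M \<inter> U. \<rho>' x \<noteq> 0) \<and>
      (\<forall>x\<in>M \<inter> U. levi_pos_def_at \<rho>' \<rho>'' x)"
    using U C2_with_derivs_subset[OF C2 \<open>U \<subseteq> \<Omega>\<close>] deriv_nonzero levi
    by (intro exI[of _ U] exI[of _ \<rho>] exI[of _ \<rho>'] exI[of _ \<rho>''] conjI) blast+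
qed

lemma blinfun_inner_right_eq_0_iff: "blinfun_inner_right v = 0 \<longleftrightarrow> v = 0"
proof
  assume "blinfun_inner_right v = 0"
  then have "v \<bullet> v = 0"
    by (metis blinfun_inner_right.rep_eq zero_blinfun.rep_eq)
  then show "v = 0"
    by simp
qed (simp add: blinfun_eqI)

section \<open>The symmetrization map\<close>

definition symmetrization :: "complex \<times> complex \<Rightarrow> complex \<times> complex" where
  "symmetrization u = (fst u + snd u, fst u * snd u)"

lemma symmetrized_bidisc_eq_image:
  "symmetrized_bidisc = symmetrization ` (ball 0 1 \<times> ball 0 1)"
  unfolding symmetrized_bidisc_def unit_disc_def symmetrization_def by force

lemma inj_on_symmetrization:
  assumes "A \<inter> B = {}"
  shows "inj_on symmetrization (A \<times> B)"
proof (rule inj_onI)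
  fix u v
  assume u: "u \<in> A \<times> B" and v: "v \<in> A \<times> B" and "symmetrization u = symmetrization v"
  then have sum: "fst u + snd u = fst v + snd v" and prod: "fst u * snd u = fst v * snd v"
    by (simp_all add: symmetrization_def)
  have "(fst v - fst u) * (fst v - snd u) = fst v * fst v - fst v * (fst u + snd u) + fst u * snd u"
    by (simp add: algebra_simps)
  also have "\<dots> = 0"
    unfolding sum prod by (simp add: algebra_simps)
  finally have "(fst v - fst u) * (fst v - snd u) = 0" .
  moreover have "fst v \<noteq> snd u"
    using assms u v by (auto simp: mem_Times_iff)
  ultimately have "fst v = fst u"
    by simp
  then show "u = v"
    using sum by (simp add: prod_eq_iff)
qed

(* The symmetrized bidisc is open, but near the diagonal the symmetrization is not injective;
   away from it invariance of domain applies directly. *)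
lemma symmetrized_bidisc_open_nhd:
  assumes z: "z1 \<in> unit_disc" "z2 \<in> unit_disc" and "z1 \<noteq> z2"
  obtains U where "open U" "(z1 + z2, z1 * z2) \<in> U" "U \<subseteq> symmetrized_bidisc"
proof -
  define r where "r = min (min (1 - cmod z1) (1 - cmod z2)) (dist z1 z2 / 2)"
  have "0 < r"
    using z \<open>z1 \<noteq> z2\<close> unfolding r_def unit_disc_def by auto
  have r: "cmod z1 + r \<le> 1" "cmod z2 + r \<le> 1" "r + r \<le> dist z1 z2"
    unfolding r_def by linarith+
  define S where "S = ball z1 r \<times> ball z2 r"
  have "ball z1 r \<subseteq> ball 0 1" "ball z2 r \<subseteq> ball 0 1"
    using r by (simp_all add: ball_subset_ball_iff dist_0_norm)
  then have "symmetrization ` S \<subseteq> symmetrized_bidisc"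
    unfolding symmetrized_bidisc_eq_image S_def by (intro image_mono Sigma_mono)
  moreover have "open (symmetrization ` S)"
  proof (rule invariance_of_domain)
    show "continuous_on S symmetrization"
      unfolding symmetrization_def by (intro continuous_intros)
    show "open S"
      unfolding S_def by (intro open_Times open_ball)
    show "inj_on symmetrization S"
      unfolding S_def using disjoint_ballI[OF r(3)] by (rule inj_on_symmetrization)
  qed
  moreover have "(z1 + z2, z1 * z2) \<in> symmetrization ` S"
    using \<open>0 < r\<close> unfolding S_def symmetrization_def by (intro image_eqI[of _ _ "(z1, z2)"]) auto
  ultimately show ?thesis
    using that by blast
qed

section \<open>Discriminant and weight\<close>

definition sym_discr :: "complex \<times> complex \<Rightarrow> complex" where
  "sym_discr x = (fst x)\<^sup>2 - 4 * snd x"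

definition sym_weight :: "complex \<times> complex \<Rightarrow> real" where
  "sym_weight x = 2 + 2 * (cmod (snd x))\<^sup>2 - (cmod (fst x))\<^sup>2"

lemma sym_discr_symmetrization: "sym_discr (z1 + z2, z1 * z2) = (z1 - z2)\<^sup>2"
  unfolding sym_discr_def by (simp add: power2_eq_square algebra_simps)

lemma sym_weight_symmetrization:
  "sym_weight (z1 + z2, z1 * z2) = 2 * (cmod (1 - cnj z1 * z2))\<^sup>2 - (cmod (z1 - z2))\<^sup>2"
  unfolding sym_weight_def cmod_power2 by (simp add: power2_eq_square algebra_simps)

lemma cmod_1_minus_cnj_mult_power2:
  "(cmod (1 - cnj z1 * z2))\<^sup>2 = (cmod (z1 - z2))\<^sup>2 + (1 - (cmod z1)\<^sup>2) * (1 - (cmod z2)\<^sup>2)"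
  unfolding cmod_power2 by (simp add: power2_eq_square algebra_simps)

lemma one_minus_cmod_power2_pos: "z \<in> unit_disc \<Longrightarrow> 0 < 1 - (cmod z)\<^sup>2"
  unfolding unit_disc_def by (simp add: abs_square_less_1)

lemma cmod_diff_lt_cmod_1_minus_cnj_mult:
  assumes "z1 \<in> unit_disc" "z2 \<in> unit_disc"
  shows "(cmod (z1 - z2))\<^sup>2 < (cmod (1 - cnj z1 * z2))\<^sup>2"
  using one_minus_cmod_power2_pos[OF assms(1)] one_minus_cmod_power2_pos[OF assms(2)]
  by (simp add: cmod_1_minus_cnj_mult_power2)

lemma cmod_mult_lt_1:
  assumes "cmod z1 < 1" "cmod z2 < 1"
  shows "cmod (z1 * z2) < 1"
proof -
  have "cmod z1 * cmod z2 \<le> cmod z2"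
    using assms by (intro mult_left_le_one_le) auto
  then show ?thesis
    using assms by (simp add: norm_mult)
qed

lemma cmod_1_minus_cnj_mult_pos:
  assumes "z1 \<in> unit_disc" "z2 \<in> unit_disc"
  shows "0 < cmod (1 - cnj z1 * z2)"
  using cmod_mult_lt_1[of "cnj z1" z2] assms unfolding unit_disc_def by auto

lemma cmod_snd_lt_1:
  assumes "x \<in> symmetrized_bidisc"
  shows "cmod (snd x) < 1"
  using cmod_mult_lt_1 assms unfolding symmetrized_bidisc_def unit_disc_def by auto

lemma sym_weight_pos:
  assumes "x \<in> symmetrized_bidisc"
  shows "0 < sym_weight x"
proof -
  obtain z1 z2 where x: "x = (z1 + z2, z1 * z2)" and z: "z1 \<in> unit_disc" "z2 \<in> unit_disc"
    using assms unfolding symmetrized_bidisc_def by blast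
  show ?thesis
    using cmod_diff_lt_cmod_1_minus_cnj_mult[OF z] zero_le_power2[of "cmod (z1 - z2)"]
    unfolding x sym_weight_symmetrization by linarith
qed

section \<open>The orbits as zero sets\<close>

definition orbit_defining_fun :: "real \<Rightarrow> complex \<times> complex \<Rightarrow> real" where
  "orbit_defining_fun a x = (2 - a\<^sup>2)\<^sup>2 * (cmod (sym_discr x))\<^sup>2 - a^4 * (sym_weight x)\<^sup>2"

lemma orbit_defining_fun_symmetrization:
  "orbit_defining_fun a (z1 + z2, z1 * z2) =
     4 * ((cmod (z1 - z2))\<^sup>2 - a\<^sup>2 * (cmod (1 - cnj z1 * z2))\<^sup>2)
       * ((1 - a\<^sup>2) * (cmod (z1 - z2))\<^sup>2 + a\<^sup>2 * (cmod (1 - cnj z1 * z2))\<^sup>2)"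
proof -
  have "cmod (sym_discr (z1 + z2, z1 * z2)) = (cmod (z1 - z2))\<^sup>2"
    by (simp add: sym_discr_symmetrization norm_power)
  then show ?thesis
    unfolding orbit_defining_fun_def sym_weight_symmetrization by algebra
qed

lemma orbit_defining_fun_eq_0_iff:
  assumes a: "0 < a" "a < 1" and z: "z1 \<in> unit_disc" "z2 \<in> unit_disc"
  shows "orbit_defining_fun a (z1 + z2, z1 * z2) = 0 \<longleftrightarrow> cmod ((z1 - z2) / (1 - cnj z1 * z2)) = a"
proof -
  define A where "A = cmod (z1 - z2)"
  define B where "B = cmod (1 - cnj z1 * z2)"
  have "0 < B"
    unfolding B_def using cmod_1_minus_cnj_mult_pos[OF z] .
  then have "0 < (1 - a\<^sup>2) * A\<^sup>2 + a\<^sup>2 * B\<^sup>2"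
    using a by (intro add_nonneg_pos mult_nonneg_nonneg) (auto intro: power_le_one)
  then have "orbit_defining_fun a (z1 + z2, z1 * z2) = 0 \<longleftrightarrow> A\<^sup>2 = (a * B)\<^sup>2"
    unfolding orbit_defining_fun_symmetrization A_def[symmetric] B_def[symmetric]
    by (simp add: power_mult_distrib)
  also have "\<dots> \<longleftrightarrow> A = a * B"
    using a \<open>0 < B\<close> by (intro power2_eq_iff_nonneg) (simp_all add: A_def)
  also have "\<dots> \<longleftrightarrow> A / B = a"
    using \<open>0 < B\<close> by (simp add: field_simps)
  finally show ?thesis
    by (simp add: A_def B_def norm_divide)
qed

lemma orbit_L_eq_zero_set:
  assumes "0 < a" "a < 1"
  shows "orbit_L a = {x \<in> symmetrized_bidisc. orbit_defining_fun a x = 0}"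
  unfolding orbit_L_def symmetrized_bidisc_def using orbit_defining_fun_eq_0_iff[OF assms] by auto

lemma orbit_L_subset: "orbit_L a \<subseteq> symmetrized_bidisc"
  unfolding orbit_L_def symmetrized_bidisc_def by blast

lemma orbit_L_open_nhd:
  assumes "0 < a" "p \<in> orbit_L a"
  obtains U where "open U" "p \<in> U" "U \<subseteq> symmetrized_bidisc"
proof -
  obtain z1 z2 where p: "p = (z1 + z2, z1 * z2)" and z: "z1 \<in> unit_disc" "z2 \<in> unit_disc"
    and "cmod ((z1 - z2) / (1 - cnj z1 * z2)) = a"
    using assms(2) unfolding orbit_L_def by blast
  then have "z1 \<noteq> z2"
    using assms(1) by auto
  then show ?thesis
    using symmetrized_bidisc_open_nhd[OF z] that unfolding p by blast
qed

lemma orbit_L_discr_weight: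
  assumes "x \<in> orbit_L a"
  shows "(2 - a\<^sup>2) * cmod (sym_discr x) = a\<^sup>2 * sym_weight x"
proof -
  obtain z1 z2 where x: "x = (z1 + z2, z1 * z2)" and z: "z1 \<in> unit_disc" "z2 \<in> unit_disc"
    and ratio: "cmod ((z1 - z2) / (1 - cnj z1 * z2)) = a"
    using assms unfolding orbit_L_def by blast
  define A where "A = cmod (z1 - z2)"
  define B where "B = cmod (1 - cnj z1 * z2)"
  have "0 < B"
    unfolding B_def using cmod_1_minus_cnj_mult_pos[OF z] .
  then have A: "A = a * B"
    using ratio by (simp add: A_def B_def norm_divide field_simps)
  have g: "cmod (sym_discr x) = A\<^sup>2" and w: "sym_weight x = 2 * B\<^sup>2 - A\<^sup>2"
    by (simp_all add: x A_def B_def sym_discr_symmetrization sym_weight_symmetrization norm_power)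
  show ?thesis
    unfolding g w A by (simp add: power_mult_distrib algebra_simps)
qed

lemma orbit_L_cmod_discr_lt_weight:
  assumes a: "0 < a" "a < 1" and x: "x \<in> orbit_L a"
  shows "cmod (sym_discr x) < sym_weight x"
proof -
  have "a\<^sup>2 < 1"
    using a by (simp add: abs_square_less_1)
  then have "a\<^sup>2 * sym_weight x < (2 - a\<^sup>2) * sym_weight x"
    using sym_weight_pos[OF subsetD[OF orbit_L_subset x]] by (intro mult_strict_right_mono) auto
  then have "(2 - a\<^sup>2) * cmod (sym_discr x) < (2 - a\<^sup>2) * sym_weight x"
    unfolding orbit_L_discr_weight[OF x] .
  then show ?thesis
    using \<open>a\<^sup>2 < 1\<close> by (simp add: mult_less_cancel_left_pos)
qed

section \<open>Derivatives of the defining function\<close>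

definition sym_discr_diff :: "complex \<times> complex \<Rightarrow> complex \<times> complex \<Rightarrow> complex" where
  "sym_discr_diff x w = 2 * fst x * fst w - 4 * snd w"

definition sym_weight_diff :: "complex \<times> complex \<Rightarrow> complex \<times> complex \<Rightarrow> complex" where
  "sym_weight_diff x w = 2 * cnj (snd x) * snd w - cnj (fst x) * fst w"

lemma sym_discr_has_derivative: "(sym_discr has_derivative sym_discr_diff x) (at x)"
  unfolding sym_discr_def[abs_def] sym_discr_diff_def[abs_def]
  apply (rule derivative_eq_intros refl)+
  apply (simp add: power2_eq_square algebra_simps)
  done

lemma sym_weight_has_derivative:
  "(sym_weight has_derivative (\<lambda>w. 2 * Re (sym_weight_diff x w))) (at x)"
  unfolding sym_weight_def[abs_def] sym_weight_diff_def power2_norm_eq_inner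
  apply (rule derivative_eq_intros refl)+
  apply (simp add: inner_complex_def algebra_simps)
  done

definition orbit_gradient :: "real \<Rightarrow> complex \<times> complex \<Rightarrow> complex \<times> complex" where
  "orbit_gradient a x =
     (of_real (4 * (2 - a\<^sup>2)\<^sup>2) * sym_discr x * cnj (fst x) + of_real (4 * a^4 * sym_weight x) * fst x,
      - of_real (8 * (2 - a\<^sup>2)\<^sup>2) * sym_discr x - of_real (8 * a^4 * sym_weight x) * snd x)"

definition orbit_gradient_deriv ::
  "real \<Rightarrow> complex \<times> complex \<Rightarrow> complex \<times> complex \<Rightarrow> complex \<times> complex" where
  "orbit_gradient_deriv a x v =
     (of_real (4 * (2 - a\<^sup>2)\<^sup>2) * (sym_discr_diff x v * cnj (fst x) + sym_discr x * cnj (fst v))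
        + of_real (4 * a^4) * (of_real (2 * Re (sym_weight_diff x v)) * fst x
                               + of_real (sym_weight x) * fst v),
      - of_real (8 * (2 - a\<^sup>2)\<^sup>2) * sym_discr_diff x v
        - of_real (8 * a^4) * (of_real (2 * Re (sym_weight_diff x v)) * snd x
                               + of_real (sym_weight x) * snd v))"

definition orbit_hessian ::
  "real \<Rightarrow> complex \<times> complex \<Rightarrow> (complex \<times> complex) \<Rightarrow>\<^sub>L ((complex \<times> complex) \<Rightarrow>\<^sub>L real)" where
  "orbit_hessian a x = Blinfun (\<lambda>v. blinfun_inner_right (orbit_gradient_deriv a x v))"

lemma inner_orbit_gradient:
  "orbit_gradient a x \<bullet> w =
     2 * Re (of_real ((2 - a\<^sup>2)\<^sup>2) * cnj (sym_discr x) * sym_discr_diff x w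
             - of_real (2 * a^4 * sym_weight x) * sym_weight_diff x w)"
  unfolding orbit_gradient_def sym_discr_diff_def sym_weight_diff_def
  by (simp add: inner_prod_def inner_complex_def algebra_simps)

lemma orbit_defining_fun_has_derivative:
  "(orbit_defining_fun a has_derivative (\<lambda>w. orbit_gradient a x \<bullet> w)) (at x)"
  unfolding orbit_defining_fun_def[abs_def] inner_orbit_gradient power2_norm_eq_inner
  apply (rule derivative_eq_intros refl sym_discr_has_derivative sym_weight_has_derivative)+
  apply (simp add: inner_complex_def power2_eq_square algebra_simps)
  done

lemma orbit_gradient_has_derivative:
  "(orbit_gradient a has_derivative orbit_gradient_deriv a x) (at x)"
  unfolding orbit_gradient_def[abs_def] orbit_gradient_deriv_def[abs_def]
  apply (rule derivative_eq_intros refl sym_discr_has_derivative sym_weight_has_derivative)+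
  apply (simp add: algebra_simps)
  done

lemma orbit_hessian_apply: "orbit_hessian a x v w = orbit_gradient_deriv a x v \<bullet> w"
proof -
  have "bounded_linear (\<lambda>v. blinfun_inner_right (orbit_gradient_deriv a x v))"
    using bounded_linear_compose[OF bounded_linear_blinfun_inner_right
        has_derivative_bounded_linear[OF orbit_gradient_has_derivative]] .
  then show ?thesis
    unfolding orbit_hessian_def by (simp add: bounded_linear_Blinfun_apply)
qed

lemma orbit_defining_fun_C2:
  "C2_with_derivs U (orbit_defining_fun a) (\<lambda>x. blinfun_inner_right (orbit_gradient a x))
     (orbit_hessian a)"
  unfolding C2_with_derivs_def
proof (intro conjI ballI)
  fix x
  show "(orbit_defining_fun a has_derivative blinfun_inner_right (orbit_gradient a x)) (at x)"
    using orbit_defining_fun_has_derivative by simp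
  have "blinfun_apply (orbit_hessian a x) = (\<lambda>v. blinfun_inner_right (orbit_gradient_deriv a x v))"
    by (intro ext blinfun_eqI) (simp add: orbit_hessian_apply)
  then show "((\<lambda>x. blinfun_inner_right (orbit_gradient a x)) has_derivative orbit_hessian a x) (at x)"
    using bounded_linear.has_derivative[OF bounded_linear_blinfun_inner_right
        orbit_gradient_has_derivative] by simp
next
  show "continuous_on U (orbit_hessian a)"
    apply (intro continuous_on_blinfun_componentwise)
    unfolding orbit_hessian_apply orbit_gradient_deriv_def sym_discr_diff_def sym_weight_diff_def
      sym_discr_def sym_weight_def
    by (intro continuous_intros)
qed

lemma orbit_gradient_nonzero:
  assumes a: "0 < a" "a < 1" and x: "x \<in> orbit_L a"
  shows "orbit_gradient a x \<noteq> 0"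
proof
  define k where "k = 2 - a\<^sup>2"
  have E: "0 < sym_weight x" and p: "cmod (snd x) < 1"
    using sym_weight_pos cmod_snd_lt_1 subsetD[OF orbit_L_subset x] by auto
  have "a\<^sup>2 < 1"
    using a by (simp add: abs_square_less_1)
  assume "orbit_gradient a x = 0"
  then have "snd (orbit_gradient a x) = 0"
    by simp
  then have "- of_real (8 * k\<^sup>2) * sym_discr x = of_real (8 * a^4 * sym_weight x) * snd x"
    unfolding orbit_gradient_def k_def snd_conv by (simp only: right_minus_eq)
  then have "cmod (of_real (8 * k\<^sup>2) * sym_discr x) = cmod (of_real (8 * a^4 * sym_weight x) * snd x)"
    by (metis norm_minus_cancel mult_minus_left)
  then have "8 * k\<^sup>2 * cmod (sym_discr x) = 8 * a^4 * sym_weight x * cmod (snd x)"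
    using E unfolding norm_mult norm_of_real by simp
  then have "(a\<^sup>2 * sym_weight x) * k = (a\<^sup>2 * sym_weight x) * (a\<^sup>2 * cmod (snd x))"
    using orbit_L_discr_weight[OF x] unfolding k_def[symmetric]
    by (simp add: power2_eq_square power4_eq_xxxx algebra_simps)
  then have "k = a\<^sup>2 * cmod (snd x)"
    using a E by simp
  moreover have "a\<^sup>2 * cmod (snd x) \<le> a\<^sup>2"
    using p by (simp add: mult_left_le)
  ultimately show False
    using \<open>a\<^sup>2 < 1\<close> unfolding k_def by linarith
qed

section \<open>The Levi form on the complex tangent line\<close>

(* Product rule for the Levi form: L(|g|^2) = |dg|^2 and L(E^2) = 2 E L(E) + 2 |dE|^2,
   with L(E)(w) = 2|w2|^2 - |w1|^2. *)
lemma levi_form_orbit_hessian: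
  "levi_form (orbit_hessian a x) w =
     (2 - a\<^sup>2)\<^sup>2 * (cmod (sym_discr_diff x w))\<^sup>2
     - a^4 * (2 * sym_weight x * (2 * (cmod (snd w))\<^sup>2 - (cmod (fst w))\<^sup>2)
              + 2 * (cmod (sym_weight_diff x w))\<^sup>2)"
  unfolding levi_form_def orbit_hessian_apply orbit_gradient_deriv_def sym_discr_diff_def
    sym_weight_diff_def sym_discr_def sym_weight_def cmulI_def cmod_power2
  by (simp add: inner_prod_def inner_complex_def power2_eq_square) algebra

lemma orbit_complex_tangent_iff:
  "orbit_gradient a x \<bullet> w = 0 \<and> orbit_gradient a x \<bullet> cmulI w = 0 \<longleftrightarrow>
     (of_real ((2 - a\<^sup>2)\<^sup>2) * cnj (sym_discr x) * sym_discr_diff x w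
       = of_real (2 * a^4 * sym_weight x) * sym_weight_diff x w)" (is "_ \<longleftrightarrow> ?rhs")
proof -
  define z where "z = of_real ((2 - a\<^sup>2)\<^sup>2) * cnj (sym_discr x) * sym_discr_diff x w
                       - of_real (2 * a^4 * sym_weight x) * sym_weight_diff x w"
  have "orbit_gradient a x \<bullet> w = 2 * Re z" "orbit_gradient a x \<bullet> cmulI w = - 2 * Im z"
    unfolding inner_orbit_gradient z_def cmulI_def sym_discr_diff_def sym_weight_diff_def
    by (simp_all add: algebra_simps)
  then have "orbit_gradient a x \<bullet> w = 0 \<and> orbit_gradient a x \<bullet> cmulI w = 0 \<longleftrightarrow> z = 0"
    by (simp add: complex_eq_iff)
  also have "z = 0 \<longleftrightarrow> ?rhs"
    unfolding z_def by (rule right_minus_eq)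
  finally show ?thesis .
qed

lemma orbit_tangent_relation:
  assumes "0 < a" and x: "x \<in> orbit_L a"
    and tangent: "of_real ((2 - a\<^sup>2)\<^sup>2) * cnj (sym_discr x) * sym_discr_diff x w
                    = of_real (2 * a^4 * sym_weight x) * sym_weight_diff x w"
  shows "of_real (sym_weight x) * sym_discr_diff x w = 2 * sym_discr x * sym_weight_diff x w"
proof -
  define E g G L where "E = sym_weight x" and "g = sym_discr x"
    and "G = sym_discr_diff x w" and "L = sym_weight_diff x w"
  have "0 < E"
    unfolding E_def using sym_weight_pos subsetD[OF orbit_L_subset x] by auto
  have "((2 - a\<^sup>2) * cmod g)\<^sup>2 = (a\<^sup>2 * E)\<^sup>2"
    unfolding E_def g_def orbit_L_discr_weight[OF x] ..
  then have norm_g: "(2 - a\<^sup>2)\<^sup>2 * (cmod g)\<^sup>2 = a^4 * E\<^sup>2"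
    by (simp add: power_mult_distrib flip: power_mult)
  have "of_real ((2 - a\<^sup>2)\<^sup>2) * (g * cnj g) * G = of_real (2 * a^4 * E) * L * g"
    using arg_cong[OF tangent, of "\<lambda>z. z * g"] unfolding E_def g_def G_def L_def
    by (simp add: algebra_simps)
  then have "of_real (a^4 * E) * (of_real E * G) = of_real (a^4 * E) * (2 * g * L)"
    unfolding complex_norm_square[symmetric] of_real_mult[symmetric] norm_g
    by (simp add: power2_eq_square algebra_simps)
  then show ?thesis
    using \<open>0 < a\<close> \<open>0 < E\<close> unfolding E_def g_def G_def L_def by simp
qed

(* W spans the solutions w of E dg(w) = 2 g dE(w), because E dg(w) - 2 g dE(w) = 2 (w1 W2 - w2 W1). *)
definition orbit_tangent_vector :: "complex \<times> complex \<Rightarrow> complex \<times> complex" where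
  "orbit_tangent_vector x =
     (2 * (of_real (sym_weight x) + sym_discr x * cnj (snd x)),
      fst x * of_real (sym_weight x) + sym_discr x * cnj (fst x))"

lemma orbit_tangent_collinear:
  assumes a: "0 < a" "a < 1" and x: "x \<in> orbit_L a"
    and rel: "of_real (sym_weight x) * sym_discr_diff x w = 2 * sym_discr x * sym_weight_diff x w"
  obtains t where "w = (t * fst (orbit_tangent_vector x), t * snd (orbit_tangent_vector x))"
proof -
  define W1 W2 where "W1 = fst (orbit_tangent_vector x)" and "W2 = snd (orbit_tangent_vector x)"
  have small: "cmod (sym_discr x * cnj (snd x)) < sym_weight x"
  proof -
    have "cmod (sym_discr x) * cmod (snd x) \<le> cmod (sym_discr x)"
      using cmod_snd_lt_1[OF subsetD[OF orbit_L_subset x]] by (simp add: mult_left_le)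
    then show ?thesis
      using orbit_L_cmod_discr_lt_weight[OF a x] by (simp add: norm_mult)
  qed
  have "W1 \<noteq> 0"
  proof
    assume "W1 = 0"
    then have "2 * (of_real (sym_weight x) + sym_discr x * cnj (snd x)) = 0"
      unfolding W1_def orbit_tangent_vector_def by (simp only: fst_conv)
    then have "sym_discr x * cnj (snd x) = - of_real (sym_weight x)"
      by (simp add: add_eq_0_iff)
    then show False
      using small by simp
  qed
  have "2 * (fst w * W2 - snd w * W1)
          = of_real (sym_weight x) * sym_discr_diff x w - 2 * sym_discr x * sym_weight_diff x w"
    unfolding W1_def W2_def orbit_tangent_vector_def sym_discr_diff_def sym_weight_diff_def
    by (simp add: algebra_simps)
  then have "fst w * W2 = snd w * W1"
    using rel by simp
  then have "w = (fst w / W1 * W1, fst w / W1 * W2)"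
    using \<open>W1 \<noteq> 0\<close> by (simp add: field_simps)
  then show ?thesis
    using that unfolding W1_def W2_def by blast
qed

(* Equals -E^2 times the Levi form of log E at x in the direction w. *)
definition weight_levi_defect :: "complex \<times> complex \<Rightarrow> complex \<times> complex \<Rightarrow> real" where
  "weight_levi_defect x w =
     (cmod (sym_weight_diff x w))\<^sup>2 - sym_weight x * (2 * (cmod (snd w))\<^sup>2 - (cmod (fst w))\<^sup>2)"

lemma weight_levi_defect_scale:
  "weight_levi_defect x (t * fst w, t * snd w) = (cmod t)\<^sup>2 * weight_levi_defect x w"
proof -
  have "sym_weight_diff x (t * fst w, t * snd w) = t * sym_weight_diff x w"
    unfolding sym_weight_diff_def by (simp add: algebra_simps)
  then show ?thesis
    unfolding weight_levi_defect_def by (simp add: norm_mult power_mult_distrib algebra_simps)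
qed

lemma weight_levi_defect_orbit_tangent_vector:
  "weight_levi_defect x (orbit_tangent_vector x)
     = 4 * sym_weight x * ((sym_weight x)\<^sup>2 - (cmod (sym_discr x))\<^sup>2)"
  unfolding weight_levi_defect_def orbit_tangent_vector_def sym_weight_diff_def sym_weight_def
    sym_discr_def cmod_power2
  by (simp add: power2_eq_square) algebra

lemma levi_form_orbit_hessian_tangent:
  assumes x: "x \<in> orbit_L a"
    and rel: "of_real (sym_weight x) * sym_discr_diff x w = 2 * sym_discr x * sym_weight_diff x w"
  shows "levi_form (orbit_hessian a x) w = 2 * a^4 * weight_levi_defect x w"
proof -
  define E g G L where "E = sym_weight x" and "g = sym_discr x"
    and "G = sym_discr_diff x w" and "L = sym_weight_diff x w"
  have "0 < E"
    unfolding E_def using sym_weight_pos subsetD[OF orbit_L_subset x] by auto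
  have "E * cmod G = 2 * cmod g * cmod L"
    using arg_cong[OF rel, of cmod] \<open>0 < E\<close> unfolding E_def g_def G_def L_def
    by (simp add: norm_mult)
  then have "E * ((2 - a\<^sup>2) * cmod G) = 2 * ((2 - a\<^sup>2) * cmod g) * cmod L"
    by (simp only: mult.left_commute[of E] mult.assoc)
  also have "\<dots> = E * (2 * a\<^sup>2 * cmod L)"
    unfolding E_def g_def orbit_L_discr_weight[OF x] by (simp add: mult_ac)
  finally have "(2 - a\<^sup>2) * cmod G = 2 * a\<^sup>2 * cmod L"
    using \<open>0 < E\<close> by simp
  then have "((2 - a\<^sup>2) * cmod G)\<^sup>2 = (2 * a\<^sup>2 * cmod L)\<^sup>2"
    by simp
  then have "(2 - a\<^sup>2)\<^sup>2 * (cmod G)\<^sup>2 = 4 * a^4 * (cmod L)\<^sup>2"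
    by (simp add: power_mult_distrib flip: power_mult)
  then show ?thesis
    unfolding levi_form_orbit_hessian weight_levi_defect_def
      E_def[symmetric] G_def[symmetric] L_def[symmetric]
    by (simp add: algebra_simps)
qed

lemma orbit_levi_pos_def:
  assumes a: "0 < a" "a < 1" and x: "x \<in> orbit_L a"
  shows "levi_pos_def_at (\<lambda>x. blinfun_inner_right (orbit_gradient a x)) (orbit_hessian a) x"
  unfolding levi_pos_def_at_def
proof (intro allI impI, elim conjE)
  fix w :: "complex \<times> complex"
  assume "w \<noteq> 0" and "blinfun_inner_right (orbit_gradient a x) w = 0"
    and "blinfun_inner_right (orbit_gradient a x) (cmulI w) = 0"
  then have "orbit_gradient a x \<bullet> w = 0 \<and> orbit_gradient a x \<bullet> cmulI w = 0"
    by simp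
  then have rel: "of_real (sym_weight x) * sym_discr_diff x w = 2 * sym_discr x * sym_weight_diff x w"
    by (intro orbit_tangent_relation[OF a(1) x]) (simp only: orbit_complex_tangent_iff)
  obtain t where t: "w = (t * fst (orbit_tangent_vector x), t * snd (orbit_tangent_vector x))"
    using orbit_tangent_collinear[OF a x rel] .
  have "t \<noteq> 0"
    using \<open>w \<noteq> 0\<close> t by (auto simp: zero_prod_def)
  have "(cmod (sym_discr x))\<^sup>2 < (sym_weight x)\<^sup>2"
    using orbit_L_cmod_discr_lt_weight[OF a x] by (intro power_strict_mono) auto
  then have "0 < weight_levi_defect x w"
    using sym_weight_pos[OF subsetD[OF orbit_L_subset x]] \<open>t \<noteq> 0\<close>
    unfolding t weight_levi_defect_scale weight_levi_defect_orbit_tangent_vector by simp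
  then show "0 < levi_form (orbit_hessian a x) w"
    unfolding levi_form_orbit_hessian_tangent[OF x rel] using a by simp
qed

theorem theorem2p11:
  fixes a :: real
  assumes "0 < a" and "a < 1"
  shows "strongly_pseudoconvex_hypersurface (orbit_L a) symmetrized_bidisc"
proof (rule strongly_pseudoconvex_hypersurfaceI)
  show "orbit_L a = {x \<in> symmetrized_bidisc. orbit_defining_fun a x = 0}"
    using orbit_L_eq_zero_set[OF assms] .
  show "C2_with_derivs symmetrized_bidisc (orbit_defining_fun a)
          (\<lambda>x. blinfun_inner_right (orbit_gradient a x)) (orbit_hessian a)"
    by (rule orbit_defining_fun_C2)
  fix x
  assume x: "x \<in> orbit_L a"
  show "blinfun_inner_right (orbit_gradient a x) \<noteq> 0"
    using orbit_gradient_nonzero[OF assms x] by (simp add: blinfun_inner_right_eq_0_iff)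
  show "levi_pos_def_at (\<lambda>x. blinfun_inner_right (orbit_gradient a x)) (orbit_hessian a) x"
    using orbit_levi_pos_def[OF assms x] .
  show "\<exists>U. open U \<and> x \<in> U \<and> U \<subseteq> symmetrized_bidisc"
    by (rule orbit_L_open_nhd[OF assms(1) x]) blast
qed

end
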